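(* Let $G$ be an almost hypohamiltonian graph containing a triangle $T$. Then every vertex of $T$ has degree at least $4$ in $G$.
   Context: All graphs are finite, undirected, connected, without loops or multiple edges. A graph is hamiltonian if it has a cycle through all its vertices. A non-hamiltonian graph $G$ is almost hypohamiltonian if there exists a vertex $w$ (the exceptional vertex) such that $G - w$ is non-hamiltonian and $G - v$ is hamiltonian for every vertex $v \neq w$. *)

theory Defs
  imports Main
begin

definition simple_graph :: "'a set \<Rightarrow> ('a \<Rightarrow> 'a \<Rightarrow> bool) \<Rightarrow> bool" where
  "simple_graph V E \<longleftrightarrow> finite V \<and> (\<forall>u v. E u v \<longrightarrow> u \<in> V \<and> v \<in> V)
     \<and> (\<forall>u v. E u v \<longrightarrow> E v u) \<and> (\<forall>v. \<not> E v v)"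

definition is_path_in :: "'a set \<Rightarrow> ('a \<Rightarrow> 'a \<Rightarrow> bool) \<Rightarrow> 'a list \<Rightarrow> bool" where
  "is_path_in S E p \<longleftrightarrow> p \<noteq> [] \<and> set p \<subseteq> S \<and> (\<forall>i. Suc i < length p \<longrightarrow> E (p ! i) (p ! Suc i))"

definition connected_graph :: "'a set \<Rightarrow> ('a \<Rightarrow> 'a \<Rightarrow> bool) \<Rightarrow> bool" where
  "connected_graph V E \<longleftrightarrow> V \<noteq> {} \<and>
     (\<forall>u\<in>V. \<forall>v\<in>V. \<exists>p. is_path_in V E p \<and> hd p = u \<and> last p = v)"

definition ham_cycle :: "'a set \<Rightarrow> ('a \<Rightarrow> 'a \<Rightarrow> bool) \<Rightarrow> 'a list \<Rightarrow> bool" where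
  "ham_cycle S E c \<longleftrightarrow> distinct c \<and> set c = S \<and> length c \<ge> 3
     \<and> (\<forall>i < length c. E (c ! i) (c ! ((Suc i) mod length c)))"

definition hamiltonian :: "'a set \<Rightarrow> ('a \<Rightarrow> 'a \<Rightarrow> bool) \<Rightarrow> bool" where
  "hamiltonian S E \<longleftrightarrow> (\<exists>c. ham_cycle S E c)"

text \<open>G - v is the subgraph induced by V - {v}; ham_cycle only uses edges among
the vertices of the cycle, so hamiltonian (V - {v}) E is hamiltonicity of G - v.\<close>

definition almost_hypohamiltonian :: "'a set \<Rightarrow> ('a \<Rightarrow> 'a \<Rightarrow> bool) \<Rightarrow> bool" where
  "almost_hypohamiltonian V E \<longleftrightarrow> simple_graph V E \<and> connected_graph V E \<and>
     \<not> hamiltonian V E \<and>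
     (\<exists>w\<in>V. \<not> hamiltonian (V - {w}) E \<and> (\<forall>v\<in>V. v \<noteq> w \<longrightarrow> hamiltonian (V - {v}) E))"

definition degree :: "'a set \<Rightarrow> ('a \<Rightarrow> 'a \<Rightarrow> bool) \<Rightarrow> 'a \<Rightarrow> nat" where
  "degree V E v = card {u \<in> V. E v u}"

end

theory Submission
  imports Defs
begin

text \<open>Let \<open>a\<close> be a vertex of a triangle \<open>axy\<close> with \<open>x\<close> not the exceptional vertex,
so that \<open>G - x\<close> has a hamiltonian cycle \<open>C\<close>. If \<open>y\<close> were one of the two neighbours of
\<open>a\<close> on \<open>C\<close>, replacing the edge \<open>ay\<close> of \<open>C\<close> by the path \<open>axy\<close> would give a hamiltonian
cycle of \<open>G\<close>. Hence \<open>a\<close> has the four distinct neighbours \<open>x\<close>, \<open>y\<close> and its two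
neighbours on \<open>C\<close>. Every vertex of a triangle has a partner in the triangle other
than the exceptional vertex, so the bound holds for all three.\<close>

definition cyclic_walk :: "('a \<Rightarrow> 'a \<Rightarrow> bool) \<Rightarrow> 'a list \<Rightarrow> bool" where
  "cyclic_walk E c \<longleftrightarrow> successively E c \<and> E (last c) (hd c)"

lemma cyclic_walk_iff_nth:
  assumes "c \<noteq> []"
  shows "cyclic_walk E c \<longleftrightarrow> (\<forall>i < length c. E (c ! i) (c ! (Suc i mod length c)))"
proof
  assume cyc: "cyclic_walk E c"
  show "\<forall>i < length c. E (c ! i) (c ! (Suc i mod length c))"
  proof (intro allI impI)
    fix i assume i: "i < length c"
    show "E (c ! i) (c ! (Suc i mod length c))"
    proof (cases "Suc i < length c")
      case True
      moreover have "successively E c" using cyc by (simp add: cyclic_walk_def)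
      ultimately show ?thesis using successively_nth[of E c i] by simp
    next
      case False
      then have "i = length c - 1" using i by simp
      then show ?thesis using cyc assms by (simp add: cyclic_walk_def last_conv_nth hd_conv_nth)
    qed
  qed
next
  assume nth: "\<forall>i < length c. E (c ! i) (c ! (Suc i mod length c))"
  have "successively E c"
    unfolding successively_conv_nth
  proof (intro allI impI)
    fix i assume "Suc i < length c"
    then show "E (c ! i) (c ! Suc i)" using nth[rule_format, of i] by simp
  qed
  moreover have "E (last c) (hd c)"
  proof -
    have "Suc (length c - 1) = length c" using assms by simp
    then have "E (c ! (length c - 1)) (c ! 0)"
      using nth[rule_format, of "length c - 1"] assms by simp
    then show ?thesis using assms by (simp add: last_conv_nth hd_conv_nth)
  qed
  ultimately show "cyclic_walk E c" by (simp add: cyclic_walk_def)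
qed

lemma ham_cycle_iff_cyclic_walk:
  "ham_cycle S E c \<longleftrightarrow> distinct c \<and> set c = S \<and> length c \<ge> 3 \<and> cyclic_walk E c"
  by (cases "c = []") (auto simp: ham_cycle_def cyclic_walk_iff_nth)

lemma cyclic_walk_append_swap:
  assumes "cyclic_walk E (xs @ ys)"
  shows "cyclic_walk E (ys @ xs)"
proof (cases "xs = [] \<or> ys = []")
  case True
  then show ?thesis using assms by auto
next
  case False
  then show ?thesis
    using assms by (auto simp: cyclic_walk_def successively_append_iff)
qed

lemma ham_cycle_append_swap:
  "ham_cycle S E (xs @ ys) \<Longrightarrow> ham_cycle S E (ys @ xs)"
  by (auto simp: ham_cycle_iff_cyclic_walk intro: cyclic_walk_append_swap)

lemma ham_cycle_rotate_to:
  assumes "ham_cycle S E c" "a \<in> set c"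
  obtains r where "ham_cycle S E (a # r)"
proof -
  obtain xs ys where "c = xs @ a # ys" using assms(2) split_list by fast
  then show ?thesis using that ham_cycle_append_swap assms(1) by fastforce
qed

lemma ham_cycle_rev:
  assumes "\<And>u v. E u v \<Longrightarrow> E v u" "ham_cycle S E c"
  shows "ham_cycle S E (rev c)"
proof -
  have "c \<noteq> []" using assms(2) by (auto simp: ham_cycle_def)
  then show ?thesis
    using assms by (auto simp: ham_cycle_iff_cyclic_walk cyclic_walk_def hd_rev last_rev
        elim: successively_mono)
qed

lemma ham_cycle_insert_vertex:
  assumes "ham_cycle S E (a # y # r)" "x \<notin> S" "E a x" "E x y"
  shows "ham_cycle (insert x S) E (a # x # y # r)"
  using assms by (auto simp: ham_cycle_iff_cyclic_walk cyclic_walk_def)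

lemma four_le_degree_if_triangle_minus_vertex_hamiltonian:
  assumes G: "simple_graph V E" and not_ham: "\<not> hamiltonian V E"
    and ham_x: "hamiltonian (V - {x}) E"
    and "x \<in> V" and ax: "E a x" and ay: "E a y" and xy: "E x y"
  shows "4 \<le> degree V E a"
proof -
  have sym: "\<And>u v. E u v \<Longrightarrow> E v u" and irrefl: "\<And>v. \<not> E v v" and "finite V"
    and in_V: "\<And>u v. E u v \<Longrightarrow> u \<in> V \<and> v \<in> V"
    using G unfolding simple_graph_def by auto
  have no_insertion: "\<not> ham_cycle (V - {x}) E (a # y # r)" for r
  proof
    assume "ham_cycle (V - {x}) E (a # y # r)"
    then have "ham_cycle (insert x (V - {x})) E (a # x # y # r)"
      using ham_cycle_insert_vertex[of "V - {x}" E a y r x] ax xy by simp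
    moreover have "insert x (V - {x}) = V" using \<open>x \<in> V\<close> by blast
    ultimately show False using not_ham by (auto simp: hamiltonian_def)
  qed
  obtain c where c: "ham_cycle (V - {x}) E c" using ham_x by (auto simp: hamiltonian_def)
  moreover have "a \<in> set c" using c in_V ax irrefl by (auto simp: ham_cycle_def)
  ultimately obtain r where C: "ham_cycle (V - {x}) E (a # r)"
    by (rule ham_cycle_rotate_to)
  have "length r \<ge> 2" using C by (simp add: ham_cycle_def)
  then obtain u r' v where r: "r = u # r' @ [v]"
  proof (cases r)
    case (Cons u t)
    with \<open>length r \<ge> 2\<close> show ?thesis
      using that by (cases t rule: rev_cases) auto
  qed simp
  have "ham_cycle (V - {x}) E (a # v # rev r' @ [u])"
    using ham_cycle_append_swap[of _ E "rev r" "[a]"] ham_cycle_rev[OF sym C] r by simp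
  then have "y \<noteq> v" using no_insertion by blast
  moreover have "y \<noteq> u" using no_insertion C r by blast
  moreover have "u \<noteq> v" "x \<notin> {u, v}" "E a u" "E a v"
    using C r sym by (auto simp: ham_cycle_iff_cyclic_walk cyclic_walk_def)
  moreover have "x \<noteq> y" using irrefl xy by blast
  ultimately have "card {x, y, u, v} = 4" by auto
  moreover have "{x, y, u, v} \<subseteq> {w \<in> V. E a w}"
    using \<open>E a u\<close> \<open>E a v\<close> ax ay in_V by auto
  then have "card {x, y, u, v} \<le> degree V E a"
    unfolding degree_def using \<open>finite V\<close> by (intro card_mono) auto
  ultimately show ?thesis by simp
qed

theorem lemma3p5:
  fixes V :: "'a set" and E :: "'a \<Rightarrow> 'a \<Rightarrow> bool" and a b c :: 'a
  assumes "almost_hypohamiltonian V E"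
    and "a \<in> V" and "b \<in> V" and "c \<in> V"
    and "E a b" and "E b c" and "E a c"
  shows "degree V E a \<ge> 4 \<and> degree V E b \<ge> 4 \<and> degree V E c \<ge> 4"
proof -
  obtain w where G: "simple_graph V E" and not_ham: "\<not> hamiltonian V E"
    and ham: "\<And>v. v \<in> V \<Longrightarrow> v \<noteq> w \<Longrightarrow> hamiltonian (V - {v}) E"
    using assms(1) unfolding almost_hypohamiltonian_def by auto
  have sym: "\<And>u v. E u v \<Longrightarrow> E v u" and irrefl: "\<And>v. \<not> E v v"
    using G unfolding simple_graph_def by auto
  have triangle: "4 \<le> degree V E p" if "q \<in> V" "s \<in> V" "E p q" "E p s" "E q s" for p q s
  proof (cases "q = w")
    case False
    then show ?thesis
      using four_le_degree_if_triangle_minus_vertex_hamiltonian[OF G not_ham ham] that by blast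
  next
    case True
    then have "s \<noteq> w" using that irrefl by blast
    then show ?thesis
      using four_le_degree_if_triangle_minus_vertex_hamiltonian[OF G not_ham ham, of s p q]
        that sym by blast
  qed
  show ?thesis
    using triangle[of b c a] triangle[of a c b] triangle[of a b c] assms sym by blast
qed

end
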